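(* Let $y=\gamma+i\tau$ with $\tau\in\mathbb{R}$ and $\gamma>-1/2$. For every compact set $K\subset\mathbb{C}$ there is a constant $C_K>0$ such that for all $a\in K$, $n\in\mathbb{N}$ and $m\in\{0,1,\dots,n\}$, \[ \bigl|{}_2F_1(-m,1+y;2\gamma+1;1-e^{ia/n})\bigr|\le {}_2F_1(-n,1+|y|;2\gamma+1;-C_K/n). \]
   Context: ${}_2F_1(\alpha,\beta;c;z)=\sum_{k\ge0}\frac{(\alpha)_k(\beta)_k}{(c)_k}\frac{z^k}{k!}$ is the Gauss hypergeometric function, where $(v)_0=1$, $(v)_k=v(v+1)\cdots(v+k-1)$; when $\alpha=-m$ is a nonpositive integer it is the polynomial $\sum_{k=0}^m\binom{m}{k}\frac{(\beta)_k}{(c)_k}(-z)^k$. *)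

theory Defs
  imports "HOL-Analysis.Analysis"
begin

text \<open>Gauss hypergeometric function 2F1(-m, b; c; z) with nonpositive integer
  first parameter -m, i.e. the terminating polynomial
  sum_{k=0}^m (m choose k) (b)_k / (c)_k (-z)^k.\<close>
definition hyp2F1_neg :: "nat \<Rightarrow> 'a::field \<Rightarrow> 'a \<Rightarrow> 'a \<Rightarrow> 'a" where
  "hyp2F1_neg m b c z =
     (\<Sum>k\<le>m. of_nat (m choose k) * pochhammer b k / pochhammer c k * (- z) ^ k)"

end

theory Submission
  imports Defs
begin

text \<open>Each coefficient of the terminating series is bounded in modulus by the corresponding
  coefficient of the real majorant: (m choose k) \<le> (n choose k) for m \<le> n, the Pochhammer
  symbol of 1 + y is dominated factorwise by that of 1 + |y|, and |1 - exp (i a / n)| = O(1/n)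
  uniformly for a in the compact set. Since all terms of the majorant are nonnegative, adding the
  terms with m < k \<le> n only increases it.\<close>

lemma norm_pochhammer_one_plus_le:
  fixes b :: "'a::real_normed_field"
  shows "norm (pochhammer (1 + b) k) \<le> pochhammer (1 + norm b) k"
proof -
  have "norm (pochhammer (1 + b) k) = (\<Prod>i<k. norm (b + of_nat (Suc i)))"
    by (simp add: pochhammer_prod prod_norm atLeast0LessThan add_ac)
  also have "\<dots> \<le> (\<Prod>i<k. norm b + of_nat (Suc i))"
    by (intro prod_mono conjI norm_ge_zero order.trans[OF norm_triangle_ineq])
      (simp only: norm_of_nat order.refl)
  also have "\<dots> = pochhammer (1 + norm b) k"
    by (simp add: pochhammer_prod atLeast0LessThan add_ac)
  finally show ?thesis .
qed

lemma norm_hyp2F1_neg_le_majorant: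
  fixes b z :: "'a::real_normed_field"
  assumes "m \<le> n" and "c > 0" and "norm z \<le> r"
  shows "norm (hyp2F1_neg m (1 + b) (of_real c) z) \<le> hyp2F1_neg n (1 + norm b) c (- r)"
proof -
  define t where
    "t k = real (n choose k) * pochhammer (1 + norm b) k / pochhammer c k * r ^ k" for k
  have poch_c: "pochhammer c k > 0" for k
    using assms(2) by (rule pochhammer_pos)
  have r: "r \<ge> 0"
    using assms(3) norm_ge_zero[of z] by linarith
  have t_nonneg: "t k \<ge> 0" for k
    unfolding t_def using poch_c[of k] r
    by (intro mult_nonneg_nonneg divide_nonneg_pos pochhammer_nonneg) (auto intro: add_pos_nonneg)
  have term_le: "norm (of_nat (m choose k) * pochhammer (1 + b) k / pochhammer (of_real c) k
      * (- z) ^ k) \<le> t k" for k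
  proof -
    have "norm (of_nat (m choose k) * pochhammer (1 + b) k / pochhammer (of_real c) k
        * (- z) ^ k) = real (m choose k) * norm (pochhammer (1 + b) k) / pochhammer c k
        * norm z ^ k"
      using poch_c[of k] by (simp add: pochhammer_of_real norm_mult norm_divide norm_power)
    also have "\<dots> \<le> t k"
      unfolding t_def using assms(2) poch_c[of k] r binomial_right_mono[OF assms(1)]
      by (intro mult_mono divide_right_mono power_mono norm_pochhammer_one_plus_le assms(3)
          mult_nonneg_nonneg divide_nonneg_pos pochhammer_nonneg) (auto intro: add_pos_nonneg)
    finally show ?thesis .
  qed
  have "norm (hyp2F1_neg m (1 + b) (of_real c) z) \<le> (\<Sum>k\<le>m. t k)"
    unfolding hyp2F1_neg_def by (intro order.trans[OF norm_sum] sum_mono term_le)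
  also have "\<dots> \<le> (\<Sum>k\<le>n. t k)"
    using assms(1) t_nonneg by (intro sum_mono2) auto
  also have "\<dots> = hyp2F1_neg n (1 + norm b) c (- r)"
    by (simp add: hyp2F1_neg_def t_def)
  finally show ?thesis .
qed

lemma norm_exp_minus_one_le: "cmod (exp z - 1) \<le> exp (cmod z) * cmod z"
  using Taylor_exp_field[of z 0] by simp

lemma norm_one_minus_exp_div_le:
  assumes "cmod a \<le> B" and "n \<ge> 1"
  shows "cmod (1 - exp (\<i> * a / of_nat n)) \<le> B * exp B / real n"
proof -
  have norm_z: "cmod (\<i> * a / of_nat n) = cmod a / real n"
    by (simp add: norm_divide norm_mult)
  have "cmod a / real n \<le> cmod a"
    using assms(2) by (simp add: divide_le_eq mult_le_cancel_left1)
  then have "cmod a / real n \<le> B"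
    using assms(1) by linarith
  then have "exp (cmod a / real n) * (cmod a / real n) \<le> exp B * (B / real n)"
    using assms by (intro mult_mono divide_right_mono) auto
  then show ?thesis
    using norm_exp_minus_one_le[of "\<i> * a / of_nat n"]
    by (simp add: norm_z norm_minus_commute mult.commute)
qed

theorem lemma2p2:
  fixes \<gamma> \<tau> :: real and K :: "complex set"
  assumes "\<gamma> > - 1 / 2" and "compact K"
  shows "\<exists>C>0. \<forall>a\<in>K. \<forall>n::nat. n \<ge> 1 \<longrightarrow> (\<forall>m\<le>n.
           cmod (hyp2F1_neg m (1 + Complex \<gamma> \<tau>) (complex_of_real (2 * \<gamma> + 1))
                   (1 - exp (\<i> * a / of_nat n)))
           \<le> hyp2F1_neg n (1 + cmod (Complex \<gamma> \<tau>)) (2 * \<gamma> + 1) (- C / real n))"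
proof -
  obtain B where B: "B \<ge> 0" "\<forall>a\<in>K. cmod a \<le> B"
    using compact_imp_bounded[OF assms(2)] bounded_pos less_imp_le by metis
  define C where "C = B * exp B + 1"
  have "C > 0"
    using B(1) by (simp add: C_def add_nonneg_pos)
  moreover have "cmod (hyp2F1_neg m (1 + Complex \<gamma> \<tau>) (complex_of_real (2 * \<gamma> + 1))
      (1 - exp (\<i> * a / of_nat n))) \<le> hyp2F1_neg n (1 + cmod (Complex \<gamma> \<tau>)) (2 * \<gamma> + 1) (- C / real n)"
    if "a \<in> K" "n \<ge> 1" "m \<le> n" for a n m
  proof -
    have "cmod (1 - exp (\<i> * a / of_nat n)) \<le> B * exp B / real n"
      using norm_one_minus_exp_div_le[of a B n] B(2) that by simp
    also have "\<dots> \<le> C / real n"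
      unfolding C_def by (intro divide_right_mono) auto
    finally show ?thesis
      using norm_hyp2F1_neg_le_majorant[OF \<open>m \<le> n\<close>, of "2 * \<gamma> + 1"] assms(1) by simp
  qed
  ultimately show ?thesis
    by blast
qed

end
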